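(* For $n\ge1$, the expected total fringe size $E^L_n=\sum_{r\ge0}E^L_{n;r}$ of a simple two-dimensional lattice path chosen uniformly at random among the $4^n$ paths of length $n$ is \[ E^L_n=\frac{4}{3\cdot4^n}\sum_{k=1}^n\Big(2k^3\big(2-2^{-v_2(k)}\big)+k\big(2^{v_2(k)+1}-1\big)\Big)\bigg[\binom{2n-1}{n-k}-\binom{2n-1}{n-k-1}\bigg], \] where $v_2(k)$ is the largest $\nu$ such that $2^\nu$ divides $k$, and binomial coefficients with negative lower index are $0$.
   Context: A simple two-dimensional lattice path is a finite nonempty word over the steps $\{\uparrow,\rightarrow,\downarrow,\leftarrow\}$; its length $|\ell|$ is the number of steps. The reduction $\Phi_L(\ell)$ of a path $\ell$ of length $\ge2$: first, if the first step of $\ell$ is vertical, the entire path is rotated by $90^\circ$ clockwise; then, if the last step is horizontal, this last step alone is rotated by $90^\circ$ clockwise. The resulting path decomposes uniquely as $H_1V_1\cdots H_kV_k$ ($k\ge1$) with each $H_i$ a nonempty maximal run of horizontal steps and each $V_i$ a nonempty maximal run of vertical steps. Each block $H_iV_i$ is replaced by $\nearrow$, $\searrow$, $\swarrow$, $\nwarrow$ according as ($H_i$ starts with $\rightarrow$, $V_i$ with $\uparrow$), ($\rightarrow$, $\downarrow$), ($\leftarrow$, $\downarrow$), ($\leftarrow$, $\uparrow$); the diagonal path is then rotated by $45^\circ$ clockwise, giving $\Phi_L(\ell)$ of length $k$. The compactification degree $\mathrm{cdeg}(\ell)$ is the number $m\ge0$ such that $\Phi_L^m(\ell)$ is a single step.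 The size of the $r$th fringe of $\ell$ is $|\Phi_L^r(\ell)|$ if $\mathrm{cdeg}(\ell)\ge r$, and $0$ otherwise; $E^L_{n;r}$ is its expectation over uniformly random paths of length $n$. *)

theory Defs
  imports Complex_Main "HOL-Computational_Algebra.Primes"
begin

datatype step = U | R | D | L

lemma UNIV_step: "(UNIV :: step set) = {U, R, D, L}"
  by (auto intro: step.exhaust)

instance step :: finite
  by standard (simp add: UNIV_step)

type_synonym lpath = "step list"

fun rot :: "step \<Rightarrow> step" where
  "rot U = R" | "rot R = D" | "rot D = L" | "rot L = U"

fun vertical :: "step \<Rightarrow> bool" where
  "vertical U = True" | "vertical D = True" | "vertical R = False" | "vertical L = False"

abbreviation horizontal :: "step \<Rightarrow> bool" where
  "horizontal s \<equiv> \<not> vertical s"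

definition norm_first :: "lpath \<Rightarrow> lpath" where
  "norm_first p = (if vertical (hd p) then map rot p else p)"

definition norm_last :: "lpath \<Rightarrow> lpath" where
  "norm_last p = (if horizontal (last p) then butlast p @ [rot (last p)] else p)"

text \<open>Block \<open>H V\<close> with H starting with h and V starting with v is replaced by a diagonal
  step; after rotating by 45 degrees clockwise: NE \<mapsto> R, SE \<mapsto> D, SW \<mapsto> L, NW \<mapsto> U.\<close>
fun diag_rot :: "step \<Rightarrow> step \<Rightarrow> step" where
  "diag_rot R U = R"
| "diag_rot R D = D"
| "diag_rot L D = L"
| "diag_rot L U = U"
| "diag_rot _ _ = undefined"

lemma length_dropWhile_le: "length (dropWhile P xs) \<le> length xs"
  by (induction xs) auto

text \<open>Decomposition into maximal blocks \<open>H\<^sub>1 V\<^sub>1 \<dots> H\<^sub>k V\<^sub>k\<close>, each block replaced by one step.\<close>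
function blocks :: "lpath \<Rightarrow> lpath" where
  "blocks [] = []"
| "blocks (x # xs) =
     (let h = takeWhile horizontal (x # xs);
          rest = dropWhile horizontal (x # xs);
          v = takeWhile vertical rest;
          rest2 = dropWhile vertical rest
      in diag_rot (hd h) (hd v) # blocks rest2)"
  by pat_completeness auto
lemma blocks_term:
  "length (dropWhile vertical (dropWhile horizontal (x # xs))) < Suc (length xs)"
proof (cases "vertical x")
  case True
  then show ?thesis using length_dropWhile_le[of vertical xs] by simp
next
  case False
  then show ?thesis
    using length_dropWhile_le[of vertical "dropWhile horizontal xs"]
          length_dropWhile_le[of horizontal xs] by simp
qed

termination
  by (relation "measure length") (use blocks_term in \<open>auto simp: Let_def\<close>)

text \<open>The reduction \<open>\<Phi>\<^sub>L\<close> (meaningful for paths of length at least 2).\<close>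
definition PhiL :: "lpath \<Rightarrow> lpath" where
  "PhiL p = blocks (norm_last (norm_first p))"

definition cdeg :: "lpath \<Rightarrow> nat" where
  "cdeg p = (LEAST m. length ((PhiL ^^ m) p) = 1)"

definition fringe_size :: "lpath \<Rightarrow> nat \<Rightarrow> nat" where
  "fringe_size p r = (if r \<le> cdeg p then length ((PhiL ^^ r) p) else 0)"

definition E_L :: "nat \<Rightarrow> nat \<Rightarrow> real" where
  "E_L n r = (\<Sum>p\<in>{p :: lpath. length p = n}. real (fringe_size p r))
              / real (card {p :: lpath. length p = n})"

definition E_L_total :: "nat \<Rightarrow> real" where
  "E_L_total n = (\<Sum>r. E_L n r)"

definition binom_int :: "nat \<Rightarrow> int \<Rightarrow> real" where
  "binom_int a b = (if b < 0 then 0 else real (a choose nat b))"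

end

theory Submission
  imports Defs
begin

text \<open>Normalisation maps the 4^n paths of length n four-to-one onto the paths that start
  horizontally and end vertically, and among those exactly C(n-1, 2k-1) 2^(n-2k) reduce to a
  given path of length k: such a path is a composition of n into 2k runs, the first step of
  each run is fixed by the reduced path, and every other step has two choices. Hence the sum
  S(n) of the total fringe sizes of all paths of length n satisfies
  S(n) = n 4^n + 4 \<Sum>{k=1..n} C(n-1, 2k-1) 2^(n-2k) S(k).

  The closed form satisfies the same recurrence. Its binomial brackets are differences
  w(2n-1, 2k-1) - w(2n-1, 2k+1) of numbers of \<open>\<plusminus>1\<close>-walks, and the binomial transform
  \<Sum>{i=0..N} C(N,i) 2^(N-i) w(i,a) = w(2N,2a) turns the convolution in the recurrence into the same
  difference at the even index 2k. The 2-adic coefficient a(k) is built so that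
  a(k) - 4 a(k/2) = 2k^3 + k (the second term only for even k), and the moment of 2k^3 + k
  against these differences is 3n 4^(n-1).\<close>

section \<open>Walk numbers and ballot differences\<close>

fun walks :: "nat \<Rightarrow> int \<Rightarrow> int" where
  "walks 0 m = (if m = 0 then 1 else 0)"
| "walks (Suc N) m = walks N (m - 1) + walks N (m + 1)"

lemma walks_eq_0_if_far: "\<bar>m\<bar> > int N \<Longrightarrow> walks N m = 0"
  by (induction N arbitrary: m) auto

lemma walks_uminus: "walks N (- m) = walks N m"
proof (induction N arbitrary: m)
  case (Suc N)
  have "- m - 1 = - (m + 1)" "- m + 1 = - (m - 1)" by simp_all
  then show ?case using Suc.IH[of "m + 1"] Suc.IH[of "m - 1"] by simp
qed auto

lemma walks_eq_0_if_odd: "odd (int N + m) \<Longrightarrow> walks N m = 0"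
proof (induction N arbitrary: m)
  case (Suc N)
  then have "odd (int N + (m - 1))" "odd (int N + (m + 1))" by auto
  with Suc.IH show ?case by simp
qed auto

lemma walks_Suc_Suc: "walks (Suc (Suc N)) m = walks N (m - 2) + 2 * walks N m + walks N (m + 2)"
  by (simp add: algebra_simps)

lemma binom_int_Suc: "binom_int (Suc N) i = binom_int N i + binom_int N (i - 1)"
proof (cases "i \<le> 0")
  case True
  then show ?thesis by (cases "i = 0") (auto simp: binom_int_def)
next
  case False
  then have "i = int (Suc (nat (i - 1)))" by simp
  then obtain k where k: "i = int (Suc k)" by blast
  have "nat (int (Suc k) - 1) = k" by simp
  then show ?thesis by (simp add: binom_int_def k del: of_nat_Suc)
qed

lemma walks_eq_binom_int: "real_of_int (walks N (int N - 2 * i)) = binom_int N i"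
proof (induction N arbitrary: i)
  case 0
  then show ?case by (auto simp: binom_int_def)
next
  case (Suc N)
  have "int (Suc N) - 2 * i - 1 = int N - 2 * i" "int (Suc N) - 2 * i + 1 = int N - 2 * (i - 1)"
    by simp_all
  then show ?case
    using Suc.IH[of i] Suc.IH[of "i - 1"] by (simp only: walks.simps binom_int_Suc of_int_add)
qed

definition binomial_transform :: "nat \<Rightarrow> (nat \<Rightarrow> int) \<Rightarrow> int" where
  "binomial_transform N f = (\<Sum>i\<le>N. int (N choose i) * 2 ^ (N - i) * f i)"

lemma binomial_transform_Suc:
  "binomial_transform (Suc N) f = 2 * binomial_transform N f + binomial_transform N (\<lambda>i. f (Suc i))"
proof -
  have "binomial_transform (Suc N) f
      = 2 ^ Suc N * f 0 + (\<Sum>i\<le>N. int (Suc N choose Suc i) * 2 ^ (N - i) * f (Suc i))"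
    unfolding binomial_transform_def by (subst sum.atMost_Suc_shift) simp
  also have "\<dots> = 2 ^ Suc N * f 0 + binomial_transform N (\<lambda>i. f (Suc i))
      + (\<Sum>i\<le>N. int (N choose Suc i) * 2 ^ (N - i) * f (Suc i))"
    unfolding binomial_transform_def by (simp add: sum.distrib algebra_simps)
  also have "(\<Sum>i\<le>N. int (N choose Suc i) * 2 ^ (N - i) * f (Suc i))
      = (\<Sum>i\<le>Suc N. int (N choose i) * 2 ^ (Suc N - i) * f i) - 2 ^ Suc N * f 0"
    by (subst sum.atMost_Suc_shift) simp
  also have "(\<Sum>i\<le>Suc N. int (N choose i) * 2 ^ (Suc N - i) * f i)
      = (\<Sum>i\<le>N. int (N choose i) * 2 ^ (Suc N - i) * f i)"
    by simp
  also have "\<dots> = 2 * binomial_transform N f"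
    unfolding binomial_transform_def sum_distrib_left
    by (intro sum.cong refl) (simp add: Suc_diff_le)
  finally show ?thesis by simp
qed

lemma binomial_transform_walks:
  "binomial_transform N (\<lambda>i. walks i a) = walks (2 * N) (2 * a)"
proof (induction N arbitrary: a)
  case 0
  then show ?case by (simp add: binomial_transform_def)
next
  case (Suc N)
  have "binomial_transform N (\<lambda>i. walks (Suc i) a)
      = binomial_transform N (\<lambda>i. walks i (a - 1)) + binomial_transform N (\<lambda>i. walks i (a + 1))"
    unfolding binomial_transform_def by (simp add: sum.distrib algebra_simps)
  then have "binomial_transform (Suc N) (\<lambda>i. walks i a)
      = 2 * walks (2 * N) (2 * a) + walks (2 * N) (2 * a - 2) + walks (2 * N) (2 * a + 2)"
    using Suc.IH[of a] Suc.IH[of "a - 1"] Suc.IH[of "a + 1"]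
    by (simp add: binomial_transform_Suc algebra_simps)
  moreover have "2 * Suc N = Suc (Suc (2 * N))" by simp
  ultimately show ?case by (simp add: algebra_simps)
qed

lemma sum_odd_reindex:
  fixes g :: "nat \<Rightarrow> 'a::comm_monoid_add"
  assumes "\<And>i. even i \<Longrightarrow> g i = 0" and "\<And>i. i \<ge> n \<Longrightarrow> g i = 0"
  shows "(\<Sum>i<n. g i) = (\<Sum>k=1..n. g (2 * k - 1))"
proof -
  have inj: "inj_on (\<lambda>k. 2 * k - 1) {1..n}" by (auto simp: inj_on_def)
  have "(\<Sum>k=1..n. g (2 * k - 1)) = sum g ((\<lambda>k. 2 * k - 1) ` {1..n})"
    by (subst sum.reindex[OF inj]) simp
  also have "\<dots> = sum g {..<2 * n}"
  proof (rule sum.mono_neutral_left)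
    show "\<forall>i\<in>{..<2 * n} - (\<lambda>k. 2 * k - 1) ` {1..n}. g i = 0"
    proof
      fix i assume i: "i \<in> {..<2 * n} - (\<lambda>k. 2 * k - 1) ` {1..n}"
      show "g i = 0"
      proof (cases "even i")
        case False
        then have "i = 2 * ((i + 1) div 2) - 1" "(i + 1) div 2 \<in> {1..n}" using i by auto
        then show ?thesis using i by blast
      qed (use assms(1) in blast)
    qed
  qed auto
  also have "\<dots> = sum g {..<n}"
    by (rule sum.mono_neutral_right) (auto intro: assms(2))
  finally show ?thesis by simp
qed

definition ballot :: "nat \<Rightarrow> int \<Rightarrow> int" where
  "ballot n j = walks (2 * n - 1) (2 * j - 1) - walks (2 * n - 1) (2 * j + 1)"

lemma ballot_eq_binom_int_diff:
  assumes "n \<ge> 1"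
  shows "binom_int (2 * n - 1) (int n - int k) - binom_int (2 * n - 1) (int n - int k - 1)
       = real_of_int (ballot n (int k))"
proof -
  have e1: "int (2 * n - 1) - 2 * (int n - int k) = 2 * int k - 1"
    and e2: "int (2 * n - 1) - 2 * (int n - int k - 1) = 2 * int k + 1"
    using assms by simp_all
  show ?thesis
    using walks_eq_binom_int[of "2 * n - 1" "int n - int k"]
      walks_eq_binom_int[of "2 * n - 1" "int n - int k - 1"]
    unfolding e1 e2 ballot_def by simp
qed

lemma ballot_eq_0_if_gt: "n \<ge> 1 \<Longrightarrow> j > int n \<Longrightarrow> ballot n j = 0"
  unfolding ballot_def by (simp add: walks_eq_0_if_far)

lemma ballot_0: "ballot n 0 = 0"
  unfolding ballot_def using walks_uminus[of "2 * n - 1" 1] by simp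

lemma ballot_Suc:
  assumes "n \<ge> 1"
  shows "ballot (Suc n) j = ballot n (j - 1) + 2 * ballot n j + ballot n (j + 1)"
proof -
  from assms have "2 * Suc n - 1 = Suc (Suc (2 * n - 1))" by simp
  then show ?thesis unfolding ballot_def by (simp only: walks_Suc_Suc) (simp add: algebra_simps)
qed

text \<open>The convolution is the binomial transform of \<open>\<lambda>i. walks i (2j-1) - walks i (2j+1)\<close>, which
  vanishes at even \<open>i\<close>.\<close>
lemma ballot_convolution:
  assumes n: "n \<ge> 1"
  shows "(\<Sum>k=1..n. int ((n - 1) choose (2 * k - 1)) * 2 ^ (n - 2 * k) * ballot k j) = ballot n (2 * j)"
proof -
  define g where "g i = int ((n - 1) choose i) * 2 ^ (n - 1 - i) * (walks i (2 * j - 1) - walks i (2 * j + 1))" for i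
  have "(\<Sum>i<n. g i) = binomial_transform (n - 1) (\<lambda>i. walks i (2 * j - 1) - walks i (2 * j + 1))"
    using n by (simp add: g_def binomial_transform_def lessThan_Suc_atMost[symmetric])
  also have "\<dots> = binomial_transform (n - 1) (\<lambda>i. walks i (2 * j - 1))
                 - binomial_transform (n - 1) (\<lambda>i. walks i (2 * j + 1))"
    unfolding binomial_transform_def by (simp add: sum_subtractf algebra_simps)
  also have "\<dots> = walks (2 * (n - 1)) (4 * j - 2) - walks (2 * (n - 1)) (4 * j + 2)"
    by (simp add: binomial_transform_walks algebra_simps)
  also have "\<dots> = ballot n (2 * j)"
  proof -
    from n have "2 * n - 1 = Suc (2 * (n - 1))" by simp
    then show ?thesis unfolding ballot_def by (simp add: algebra_simps)
  qed
  finally have "(\<Sum>i<n. g i) = ballot n (2 * j)" .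
  moreover have "(\<Sum>i<n. g i) = (\<Sum>k=1..n. g (2 * k - 1))"
    by (rule sum_odd_reindex) (use n in \<open>auto simp: g_def walks_eq_0_if_odd\<close>)
  moreover have "g (2 * k - 1) = int ((n - 1) choose (2 * k - 1)) * 2 ^ (n - 2 * k) * ballot k j"
    if "k \<in> {1..n}" for k
    using that by (simp add: g_def ballot_def)
  ultimately show ?thesis by simp
qed

text \<open>Summation by parts against the recurrence \<open>ballot_Suc\<close>.\<close>
lemma sum_ballot_Suc:
  fixes g :: "nat \<Rightarrow> real"
  assumes n: "n \<ge> 1" and g0: "g 0 = 0"
  shows "(\<Sum>j=1..Suc n. g j * ballot (Suc n) (int j))
       = (\<Sum>j=1..n. (g (j - 1) + 2 * g j + g (j + 1)) * ballot n (int j))"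
proof -
  define b where "b j = real_of_int (ballot n (int j))" for j
  have b0: "b 0 = 0" by (simp add: b_def ballot_0)
  have b_gt: "b j = 0" if "j > n" for j using that n by (simp add: b_def ballot_eq_0_if_gt)
  have "(\<Sum>j=1..Suc n. g j * ballot (Suc n) (int j)) = (\<Sum>j\<le>Suc n. g j * ballot (Suc n) (int j))"
    by (rule sum.mono_neutral_left) (auto simp: g0 Suc_le_eq)
  also have "\<dots> = (\<Sum>j\<le>Suc n. g j * b (j - 1) + 2 * (g j * b j) + g j * b (j + 1))"
  proof (intro sum.cong refl)
    fix j
    show "g j * ballot (Suc n) (int j) = g j * b (j - 1) + 2 * (g j * b j) + g j * b (j + 1)"
    proof (cases "j = 0")
      case False
      then have "int j - 1 = int (j - 1)" by simp
      then show ?thesis using n False by (simp add: ballot_Suc b_def algebra_simps)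
    qed (simp add: g0)
  qed
  also have "\<dots> = (\<Sum>j\<le>Suc n. g j * b (j - 1)) + 2 * (\<Sum>j\<le>Suc n. g j * b j)
                 + (\<Sum>j\<le>Suc n. g j * b (j + 1))"
    by (simp add: sum.distrib sum_distrib_left)
  also have "(\<Sum>j\<le>Suc n. g j * b (j - 1)) = (\<Sum>j\<le>Suc n. g (j + 1) * b j)"
  proof -
    have "(\<Sum>j\<le>Suc (Suc n). g j * b (j - 1)) = (\<Sum>j\<le>Suc n. g (j + 1) * b j)"
      by (subst sum.atMost_Suc_shift) (simp add: g0)
    then show ?thesis by (simp add: b_gt)
  qed
  also have "(\<Sum>j\<le>Suc n. g j * b (j + 1)) = (\<Sum>j\<le>Suc n. g (j - 1) * b j)"
  proof -
    have "(\<Sum>j\<le>Suc (Suc n). g (j - 1) * b j) = (\<Sum>j\<le>Suc n. g j * b (j + 1))"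
      by (subst sum.atMost_Suc_shift) (simp add: b0)
    then show ?thesis by (simp add: b_gt)
  qed
  also have "(\<Sum>j\<le>Suc n. g (j + 1) * b j) + 2 * (\<Sum>j\<le>Suc n. g j * b j) + (\<Sum>j\<le>Suc n. g (j - 1) * b j)
      = (\<Sum>j\<le>Suc n. (g (j - 1) + 2 * g j + g (j + 1)) * b j)"
    by (simp add: sum.distrib sum_distrib_left algebra_simps)
  also have "\<dots> = (\<Sum>j=1..n. (g (j - 1) + 2 * g j + g (j + 1)) * b j)"
    by (rule sum.mono_neutral_right) (auto simp: b0 b_gt Suc_le_eq)
  finally show ?thesis by (simp add: b_def)
qed

lemma ballot_moment_1: "n \<ge> 1 \<Longrightarrow> (\<Sum>j=1..n. real j * ballot n (int j)) = 4 ^ (n - 1)"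
proof (induction n rule: dec_induct)
  case base
  then show ?case by (simp add: ballot_def)
next
  case (step n)
  have "(\<Sum>j=1..Suc n. real j * ballot (Suc n) (int j))
      = (\<Sum>j=1..n. (real (j - 1) + 2 * real j + real (j + 1)) * ballot n (int j))"
    using sum_ballot_Suc[of n real] step by simp
  also have "\<dots> = 4 * (\<Sum>j=1..n. real j * ballot n (int j))"
    by (simp add: sum_distrib_left, intro sum.cong refl) (auto simp: of_nat_diff algebra_simps)
  also have "\<dots> = 4 ^ (Suc n - 1)"
    using step by (cases n) auto
  finally show ?case .
qed

lemma ballot_moment_3:
  "n \<ge> 1 \<Longrightarrow> (\<Sum>j=1..n. (2 * real j ^ 3 + real j) * ballot n (int j)) = 3 * real n * 4 ^ (n - 1)"
proof (induction n rule: dec_induct)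
  case base
  then show ?case by (simp add: ballot_def)
next
  case (step n)
  define f :: "nat \<Rightarrow> real" where "f j = 2 * real j ^ 3 + real j" for j
  have shift: "f (j - 1) + 2 * f j + f (j + 1) = 4 * f j + 12 * real j" if "j \<ge> 1" for j
    using that by (simp add: f_def of_nat_diff power3_eq_cube algebra_simps)
  have "(\<Sum>j=1..Suc n. f j * ballot (Suc n) (int j))
      = (\<Sum>j=1..n. (f (j - 1) + 2 * f j + f (j + 1)) * ballot n (int j))"
    by (rule sum_ballot_Suc) (use step.hyps in \<open>auto simp: f_def\<close>)
  also have "\<dots> = (\<Sum>j=1..n. 4 * (f j * ballot n (int j)) + 12 * (real j * ballot n (int j)))"
  proof (intro sum.cong refl)
    fix j assume "j \<in> {1..n}"
    then have "f (j - 1) + 2 * f j + f (j + 1) = 4 * f j + 12 * real j" by (intro shift) simp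
    then show "(f (j - 1) + 2 * f j + f (j + 1)) * ballot n (int j)
        = 4 * (f j * ballot n (int j)) + 12 * (real j * ballot n (int j))"
      by (simp only:) (simp add: algebra_simps)
  qed
  also have "\<dots> = 4 * (\<Sum>j=1..n. f j * ballot n (int j)) + 12 * (\<Sum>j=1..n. real j * ballot n (int j))"
    by (simp add: sum.distrib sum_distrib_left)
  also have "\<dots> = 3 * real (Suc n) * 4 ^ (Suc n - 1)"
    using step ballot_moment_1[of n] by (cases n) (auto simp: f_def algebra_simps)
  finally show ?case by (simp add: f_def)
qed

section \<open>The closed form\<close>

definition fringe_coeff :: "nat \<Rightarrow> real" where
  "fringe_coeff k = 2 * real k ^ 3 * (2 - 1 / 2 ^ multiplicity (2::nat) k)
        + real k * (2 ^ (multiplicity (2::nat) k + 1) - 1)"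

lemma fringe_coeff_rec:
  assumes "i \<ge> 1"
  shows "fringe_coeff i - 4 * (if even i then fringe_coeff (i div 2) else 0) = 2 * real i ^ 3 + real i"
proof (cases "even i")
  case True
  then obtain m where m: "i = 2 * m" by blast
  with assms have "multiplicity (2::nat) i = Suc (multiplicity 2 m)"
    by (simp add: multiplicity_times_same)
  moreover define p :: real where "p = 2 ^ multiplicity (2::nat) m"
  moreover have "p > 0" by (simp add: p_def)
  then have "2 * (2 * x) ^ 3 * (2 - 1 / (2 * p)) + 2 * x * (4 * p - 1)
      - 4 * (2 * x ^ 3 * (2 - 1 / p) + x * (2 * p - 1)) = 2 * (2 * x) ^ 3 + 2 * x" for x :: real
    by (simp add: field_simps power3_eq_cube)
  ultimately show ?thesis using True by (simp add: fringe_coeff_def m)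
next
  case False
  then have "multiplicity (2::nat) i = 0" by (simp add: not_dvd_imp_multiplicity_0)
  with False show ?thesis by (simp add: fringe_coeff_def)
qed

definition closed_form :: "nat \<Rightarrow> real" where
  "closed_form n = 4 / 3 * (\<Sum>k=1..n. fringe_coeff k * ballot n (int k))"

lemma sum_ballot_even_reindex:
  assumes n: "n \<ge> 1"
  shows "(\<Sum>j=1..n. fringe_coeff j * ballot n (2 * int j))
       = (\<Sum>i=1..n. (if even i then fringe_coeff (i div 2) else 0) * ballot n (int i))"
proof -
  define f where "f i = (if even i then fringe_coeff (i div 2) else 0) * ballot n (int i)" for i
  have inj: "inj_on (\<lambda>j. 2 * j) {1..n::nat}" by (auto simp: inj_on_def)
  have "(\<Sum>j=1..n. fringe_coeff j * ballot n (2 * int j)) = sum f ((\<lambda>j. 2 * j) ` {1..n})"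
    by (subst sum.reindex[OF inj]) (simp add: f_def)
  also have "\<dots> = sum f {1..2 * n}"
  proof (rule sum.mono_neutral_left)
    show "\<forall>i\<in>{1..2 * n} - (\<lambda>j. 2 * j) ` {1..n}. f i = 0"
    proof
      fix i assume i: "i \<in> {1..2 * n} - (\<lambda>j. 2 * j) ` {1..n}"
      show "f i = 0"
      proof (cases "even i")
        case True
        then have "i = 2 * (i div 2)" "i div 2 \<in> {1..n}" using i by auto
        then show ?thesis using i by blast
      qed (simp add: f_def)
    qed
  qed auto
  also have "\<dots> = sum f {1..n}"
    by (rule sum.mono_neutral_right) (auto simp: f_def ballot_eq_0_if_gt n)
  finally show ?thesis by (simp add: f_def)
qed

lemma closed_form_convolution:
  assumes n: "n \<ge> 1"
  shows "(\<Sum>k=1..n. real ((n - 1) choose (2 * k - 1)) * 2 ^ (n - 2 * k) * closed_form k)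
       = 4 / 3 * (\<Sum>i=1..n. (if even i then fringe_coeff (i div 2) else 0) * ballot n (int i))"
proof -
  define c where "c k = real ((n - 1) choose (2 * k - 1)) * 2 ^ (n - 2 * k)" for k
  have extend: "closed_form k = 4 / 3 * (\<Sum>j=1..n. fringe_coeff j * ballot k (int j))"
    if "k \<in> {1..n}" for k
  proof -
    have "(\<Sum>j=1..k. fringe_coeff j * ballot k (int j)) = (\<Sum>j=1..n. fringe_coeff j * ballot k (int j))"
      by (rule sum.mono_neutral_left) (use that in \<open>auto simp: ballot_eq_0_if_gt\<close>)
    then show ?thesis by (simp add: closed_form_def)
  qed
  have "(\<Sum>k=1..n. c k * closed_form k)
      = (\<Sum>k=1..n. c k * (4 / 3 * (\<Sum>j=1..n. fringe_coeff j * ballot k (int j))))"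
    by (intro sum.cong refl) (simp add: extend)
  also have "\<dots> = 4 / 3 * (\<Sum>j=1..n. fringe_coeff j * (\<Sum>k=1..n. c k * ballot k (int j)))"
    by (simp add: sum_distrib_left sum_distrib_right mult_ac) (rule sum.swap)
  also have "\<dots> = 4 / 3 * (\<Sum>j=1..n. fringe_coeff j * ballot n (2 * int j))"
    using arg_cong[OF ballot_convolution[OF n], of real_of_int] by (simp add: c_def)
  finally show ?thesis unfolding c_def sum_ballot_even_reindex[OF n] .
qed

lemma closed_form_rec:
  assumes n: "n \<ge> 1"
  shows "closed_form n = real n * 4 ^ n
    + 4 * (\<Sum>k=1..n. real ((n - 1) choose (2 * k - 1)) * 2 ^ (n - 2 * k) * closed_form k)"
proof -
  have "closed_form n - 16 / 3 * (\<Sum>i=1..n. (if even i then fringe_coeff (i div 2) else 0) * ballot n (int i))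
      = 4 / 3 * (\<Sum>i=1..n. (fringe_coeff i - 4 * (if even i then fringe_coeff (i div 2) else 0)) * ballot n (int i))"
    by (simp add: closed_form_def sum_subtractf sum_distrib_left algebra_simps)
  also have "\<dots> = 4 / 3 * (\<Sum>i=1..n. (2 * real i ^ 3 + real i) * ballot n (int i))"
    by (simp add: fringe_coeff_rec)
  also have "\<dots> = real n * 4 ^ n"
    using ballot_moment_3[OF n] n by (cases n) auto
  finally show ?thesis using closed_form_convolution[OF n] by simp
qed

section \<open>Fibres of the block reduction\<close>

lemma blocks_hor_hor: "horizontal x \<Longrightarrow> horizontal y \<Longrightarrow> blocks (x # y # r) = blocks (x # r)"
  by (simp add: Let_def)

lemma blocks_hor_ver_ver:
  "horizontal x \<Longrightarrow> vertical v \<Longrightarrow> vertical v' \<Longrightarrow> blocks (x # v # v' # r) = blocks (x # v # r)"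
  by (simp add: Let_def)

lemma blocks_hor_ver_hor:
  "horizontal x \<Longrightarrow> vertical v \<Longrightarrow> r = [] \<or> horizontal (hd r) \<Longrightarrow>
    blocks (x # v # r) = diag_rot x v # blocks r"
  by (cases r) (auto simp: Let_def)

lemma blocks_eq_Nil_iff [simp]: "blocks p = [] \<longleftrightarrow> p = []"
  by (cases p) (auto simp: Let_def)

text \<open>The first horizontal and the first vertical step of a block reducing to a given step.\<close>
fun block_hor :: "step \<Rightarrow> step" where
  "block_hor R = R" | "block_hor D = R" | "block_hor L = L" | "block_hor U = L"

fun block_ver :: "step \<Rightarrow> step" where
  "block_ver R = U" | "block_ver U = U" | "block_ver D = D" | "block_ver L = D"

lemma block_hor_ver:
  "horizontal (block_hor c)" "vertical (block_ver c)" "diag_rot (block_hor c) (block_ver c) = c"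
  by (cases c; simp)+

lemma block_hor_ver_diag_rot:
  "horizontal x \<Longrightarrow> vertical v \<Longrightarrow> block_hor (diag_rot x v) = x \<and> block_ver (diag_rot x v) = v"
  by (cases x; cases v; simp)

lemma horizontal_iff: "horizontal y \<longleftrightarrow> y \<in> {R, L}"
  by (cases y) auto

lemma vertical_iff: "vertical y \<longleftrightarrow> y \<in> {U, D}"
  by (cases y) auto

lemma Cons_Cons_if_length_ge_2: "length p \<ge> 2 \<Longrightarrow> \<exists>x y r. p = x # y # r"
  by (cases p; cases "tl p") auto

definition normal_paths :: "nat \<Rightarrow> lpath set" where
  "normal_paths n = {p. length p = n \<and> horizontal (hd p) \<and> vertical (last p)}"

definition block_fibre :: "nat \<Rightarrow> lpath \<Rightarrow> lpath set" where
  "block_fibre n q = {p \<in> normal_paths n. blocks p = q}"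

text \<open>The paths of a fibre whose first block has more than one horizontal, resp. exactly one
  horizontal, step.\<close>
definition fibre_hor :: "nat \<Rightarrow> lpath \<Rightarrow> lpath set" where
  "fibre_hor n q = {p \<in> block_fibre n q. horizontal (p ! 1)}"

definition fibre_ver :: "nat \<Rightarrow> lpath \<Rightarrow> lpath set" where
  "fibre_ver n q = {p \<in> block_fibre n q. vertical (p ! 1)}"

lemma finite_paths_of_length: "finite {p :: lpath. length p = n}"
  using finite_lists_length_eq[of "UNIV :: step set" n] by simp

lemma card_paths_of_length: "card {p :: lpath. length p = n} = 4 ^ n"
proof -
  have "card (UNIV :: step set) = 4" unfolding UNIV_step by simp
  then show ?thesis using card_lists_length_eq[of "UNIV :: step set" n] by simp
qed

lemma finite_normal_paths: "finite (normal_paths n)"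
  by (rule finite_subset[OF _ finite_paths_of_length[of n]]) (auto simp: normal_paths_def)

lemma finite_fibres: "finite (block_fibre n q)" "finite (fibre_hor n q)" "finite (fibre_ver n q)"
  by (rule finite_subset[OF _ finite_normal_paths[of n]];
      auto simp: block_fibre_def fibre_hor_def fibre_ver_def)+

lemma normal_paths_1: "normal_paths 1 = {}"
  by (auto simp: normal_paths_def length_Suc_conv)

lemma block_fibre_Nil: "n \<ge> 1 \<Longrightarrow> block_fibre n [] = {}"
  by (auto simp: block_fibre_def normal_paths_def)

lemma card_block_fibre_split: "card (block_fibre n q) = card (fibre_hor n q) + card (fibre_ver n q)"
proof -
  have "block_fibre n q = fibre_hor n q \<union> fibre_ver n q" "fibre_hor n q \<inter> fibre_ver n q = {}"
    by (auto simp: fibre_hor_def fibre_ver_def)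
  then show ?thesis using finite_fibres by (simp add: card_Un_disjoint)
qed

text \<open>Deleting the second step, which is horizontal, is two-to-one onto the fibre one shorter.\<close>
lemma fibre_hor_Suc:
  assumes n: "n \<ge> 2"
  shows "fibre_hor (Suc n) q = (\<lambda>(y, p). hd p # y # tl p) ` ({R, L} \<times> block_fibre n q)"
proof (intro equalityI subsetI)
  fix p assume p: "p \<in> fibre_hor (Suc n) q"
  then have len: "length p = Suc n" by (simp add: fibre_hor_def block_fibre_def normal_paths_def)
  with n obtain x y r where pe: "p = x # y # r" and r: "r \<noteq> []"
    by (cases p; cases "tl p"; cases "tl (tl p)") auto
  have hx: "horizontal x" and hy: "horizontal y" and lr: "vertical (last r)" and bq: "blocks p = q"
    using p r by (auto simp: fibre_hor_def block_fibre_def normal_paths_def pe)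
  have "x # r \<in> block_fibre n q"
    using len r hx lr bq blocks_hor_hor[OF hx hy, of r] by (auto simp: block_fibre_def normal_paths_def pe)
  with hy show "p \<in> (\<lambda>(y, p). hd p # y # tl p) ` ({R, L} \<times> block_fibre n q)"
    unfolding pe by (auto simp: horizontal_iff intro!: image_eqI[where x="(y, x # r)"])
next
  fix p assume "p \<in> (\<lambda>(y, p). hd p # y # tl p) ` ({R, L} \<times> block_fibre n q)"
  then obtain y p0 where y: "y \<in> {R, L}" and p0: "p0 \<in> block_fibre n q" and pe: "p = hd p0 # y # tl p0"
    by auto
  have "length p0 = n" using p0 by (simp add: block_fibre_def normal_paths_def)
  with n obtain x r where p0e: "p0 = x # r" and r: "r \<noteq> []"
    by (cases p0; cases "tl p0") auto
  have hx: "horizontal x" and lr: "vertical (last r)" and bq: "blocks p0 = q"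
    using p0 r by (auto simp: block_fibre_def normal_paths_def p0e)
  have hy: "horizontal y" using y by (simp add: horizontal_iff)
  show "p \<in> fibre_hor (Suc n) q"
    using p0 r hx hy lr bq blocks_hor_hor[OF hx hy, of r]
    by (auto simp: fibre_hor_def block_fibre_def normal_paths_def pe p0e)
qed

lemma card_fibre_hor_Suc:
  assumes n: "n \<ge> 2"
  shows "card (fibre_hor (Suc n) q) = 2 * card (block_fibre n q)"
proof -
  have "inj_on (\<lambda>(y, p). hd p # y # tl p) ({R, L} \<times> block_fibre n q)"
  proof (rule inj_on_inverseI[where g="\<lambda>l. (l ! 1, hd l # tl (tl l))"])
    fix a assume "a \<in> {R, L} \<times> block_fibre n q"
    then obtain y p where a: "a = (y, p)" and "p \<in> block_fibre n q" by auto
    with n have "p \<noteq> []" by (auto simp: block_fibre_def normal_paths_def)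
    then show "(\<lambda>l. (l ! 1, hd l # tl (tl l))) ((\<lambda>(y, p). hd p # y # tl p) a) = a"
      by (simp add: a)
  qed
  then show ?thesis
    unfolding fibre_hor_Suc[OF n] using finite_fibres by (simp add: card_image card_cartesian_product)
qed

text \<open>A path in \<open>fibre_ver\<close> either has a third vertical step, whose deletion is two-to-one
  onto \<open>fibre_ver\<close> one shorter, or its first block has length two and is determined by \<open>hd q\<close>.\<close>
lemma fibre_ver_Suc_subset:
  assumes n: "n \<ge> 2"
  shows "fibre_ver (Suc n) q
       \<subseteq> (\<lambda>(z, p). hd p # hd (tl p) # z # tl (tl p)) ` ({U, D} \<times> fibre_ver n q)
         \<union> (\<lambda>r. block_hor (hd q) # block_ver (hd q) # r) ` block_fibre (n - 1) (tl q)"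
proof
  fix p assume p: "p \<in> fibre_ver (Suc n) q"
  then have len: "length p = Suc n" by (simp add: fibre_ver_def block_fibre_def normal_paths_def)
  with n obtain x v z r where pe: "p = x # v # z # r"
    by (cases p; cases "tl p"; cases "tl (tl p)") auto
  have hx: "horizontal x" and vv: "vertical v" and lr: "vertical (last (z # r))" and bq: "blocks p = q"
    using p by (auto simp: fibre_ver_def block_fibre_def normal_paths_def pe)
  show "p \<in> (\<lambda>(z, p). hd p # hd (tl p) # z # tl (tl p)) ` ({U, D} \<times> fibre_ver n q)
         \<union> (\<lambda>r. block_hor (hd q) # block_ver (hd q) # r) ` block_fibre (n - 1) (tl q)"
  proof (cases "vertical z")
    case True
    have "x # v # r \<in> fibre_ver n q"
      using len hx vv lr bq blocks_hor_ver_ver[OF hx vv True, of r] True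
      by (auto simp: fibre_ver_def block_fibre_def normal_paths_def pe)
    with True show ?thesis
      unfolding pe by (auto simp: vertical_iff intro!: image_eqI[where x="(z, x # v # r)"])
  next
    case False
    have "q = diag_rot x v # blocks (z # r)"
      using bq blocks_hor_ver_hor[OF hx vv, of "z # r"] False by (simp add: pe)
    moreover have "z # r \<in> block_fibre (n - 1) (blocks (z # r))"
      using len lr False by (auto simp: block_fibre_def normal_paths_def pe)
    ultimately show ?thesis using block_hor_ver_diag_rot[OF hx vv] by (auto simp: pe)
  qed
qed

lemma insert_third_ver_in_fibre_ver:
  assumes n: "n \<ge> 2" and z: "vertical z" and p: "p \<in> fibre_ver n q"
  shows "hd p # hd (tl p) # z # tl (tl p) \<in> fibre_ver (Suc n) q"
proof -
  have len: "length p = n" using p by (simp add: fibre_ver_def block_fibre_def normal_paths_def)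
  with n obtain x v r where pe: "p = x # v # r" by (cases p; cases "tl p") auto
  have hx: "horizontal x" and vv: "vertical v" and lr: "vertical (last (x # v # r))"
    and bq: "blocks p = q"
    using p by (auto simp: fibre_ver_def block_fibre_def normal_paths_def pe)
  have "vertical (last (z # r))" using lr z by (cases r) auto
  then show ?thesis
    using len hx vv z bq blocks_hor_ver_ver[OF hx vv z, of r]
    by (auto simp: fibre_ver_def block_fibre_def normal_paths_def pe)
qed

lemma prepend_block_in_fibre_ver:
  assumes n: "n \<ge> 2" and q: "q \<noteq> []" and r: "r \<in> block_fibre (n - 1) (tl q)"
  shows "block_hor (hd q) # block_ver (hd q) # r \<in> fibre_ver (Suc n) q"
proof -
  have len: "length r = n - 1" and lr: "vertical (last r)" and hr: "horizontal (hd r)"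
    and br: "blocks r = tl q"
    using r by (auto simp: block_fibre_def normal_paths_def)
  have "blocks (block_hor (hd q) # block_ver (hd q) # r) = q"
    using br q blocks_hor_ver_hor[OF block_hor_ver(1,2), of r "hd q" "hd q"] hr block_hor_ver(3)
    by auto
  then show ?thesis
    using len lr hr n block_hor_ver(1,2)[of "hd q"]
    by (auto simp: fibre_ver_def block_fibre_def normal_paths_def)
qed

lemma fibre_ver_Suc:
  assumes n: "n \<ge> 2" and q: "q \<noteq> []"
  shows "fibre_ver (Suc n) q
       = (\<lambda>(z, p). hd p # hd (tl p) # z # tl (tl p)) ` ({U, D} \<times> fibre_ver n q)
         \<union> (\<lambda>r. block_hor (hd q) # block_ver (hd q) # r) ` block_fibre (n - 1) (tl q)"
proof (rule equalityI[OF fibre_ver_Suc_subset[OF n]], intro Un_least image_subsetI)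
  fix x assume "x \<in> {U, D} \<times> fibre_ver n q"
  then obtain z p where "x = (z, p)" "vertical z" "p \<in> fibre_ver n q" by (auto simp: vertical_iff)
  then show "(\<lambda>(z, p). hd p # hd (tl p) # z # tl (tl p)) x \<in> fibre_ver (Suc n) q"
    using insert_third_ver_in_fibre_ver[OF n] by simp
qed (rule prepend_block_in_fibre_ver[OF n q])

lemma card_fibre_ver_Suc:
  assumes n: "n \<ge> 2" and q: "q \<noteq> []"
  shows "card (fibre_ver (Suc n) q) = 2 * card (fibre_ver n q) + card (block_fibre (n - 1) (tl q))"
proof -
  let ?f = "\<lambda>(z, p). hd p # hd (tl p) # z # tl (tl p)"
  let ?g = "\<lambda>r. block_hor (hd q) # block_ver (hd q) # r"
  have inj: "inj_on ?f ({U, D} \<times> fibre_ver n q)"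
  proof (rule inj_on_inverseI[where g="\<lambda>l. (l ! 2, hd l # hd (tl l) # tl (tl (tl l)))"])
    fix a assume "a \<in> {U, D} \<times> fibre_ver n q"
    then obtain z p where a: "a = (z, p)" and "p \<in> fibre_ver n q" by auto
    then have "length p = n" by (auto simp: fibre_ver_def block_fibre_def normal_paths_def)
    with n obtain x v r where "p = x # v # r" by (cases p; cases "tl p") auto
    then show "(\<lambda>l. (l ! 2, hd l # hd (tl l) # tl (tl (tl l)))) (?f a) = a"
      by (simp add: a)
  qed
  have disjoint: "?f ` ({U, D} \<times> fibre_ver n q) \<inter> ?g ` block_fibre (n - 1) (tl q) = {}"
  proof -
    have "horizontal (l ! 2)" if l: "l \<in> ?g ` block_fibre (n - 1) (tl q)" for l
    proof -
      obtain r where r: "r \<in> block_fibre (n - 1) (tl q)" "l = ?g r" using l by auto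
      with n have "r \<noteq> []" "horizontal (hd r)" by (auto simp: block_fibre_def normal_paths_def)
      with r show ?thesis by (cases r) auto
    qed
    moreover have "vertical (l ! 2)" if "l \<in> ?f ` ({U, D} \<times> fibre_ver n q)" for l
      using that by (auto simp: vertical_iff)
    ultimately show ?thesis by blast
  qed
  have "inj_on ?g (block_fibre (n - 1) (tl q))" by (auto simp: inj_on_def)
  with inj disjoint show ?thesis
    unfolding fibre_ver_Suc[OF n q] using finite_fibres
    by (simp add: card_Un_disjoint card_image card_cartesian_product)
qed

lemma fibre_hor_2: "fibre_hor 2 q = {}"
  by (auto simp: fibre_hor_def block_fibre_def normal_paths_def length_Suc_conv numeral_2_eq_2)

lemma fibre_ver_2: "fibre_ver 2 q = (if length q = 1 then {[block_hor (hd q), block_ver (hd q)]} else {})"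
proof (intro equalityI subsetI)
  fix p assume p: "p \<in> fibre_ver 2 q"
  then obtain x v where pe: "p = [x, v]"
    by (auto simp: fibre_ver_def block_fibre_def normal_paths_def length_Suc_conv numeral_2_eq_2)
  have hx: "horizontal x" and vv: "vertical v" and "blocks p = q"
    using p by (auto simp: fibre_ver_def block_fibre_def normal_paths_def pe)
  then have "q = [diag_rot x v]" using blocks_hor_ver_hor[OF hx vv, of "[]"] by (simp add: pe)
  then show "p \<in> (if length q = 1 then {[block_hor (hd q), block_ver (hd q)]} else {})"
    using block_hor_ver_diag_rot[OF hx vv] by (simp add: pe)
next
  fix p assume "p \<in> (if length q = 1 then {[block_hor (hd q), block_ver (hd q)]} else {})"
  then obtain c where "q = [c]" and "p = [block_hor c, block_ver c]"
    by (cases q) (auto split: if_splits)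
  then show "p \<in> fibre_ver 2 q"
    using blocks_hor_ver_hor[OF block_hor_ver(1,2), of "[]" c] block_hor_ver[of c]
    by (simp add: fibre_ver_def block_fibre_def normal_paths_def)
qed

lemma card_fibre_ver_Suc_count:
  assumes n: "n \<ge> 2" and q: "length q = Suc k"
    and ver: "card (fibre_ver n q) * 4 ^ Suc k = ((n - 2) choose (2 * k)) * 2 ^ n"
    and fibre: "\<And>k'. k = Suc k' \<Longrightarrow>
      card (block_fibre (n - 1) (tl q)) * 4 ^ Suc k' = ((n - 2) choose (2 * k' + 1)) * 2 ^ (n - 1)"
  shows "card (fibre_ver (Suc n) q) * 4 ^ Suc k = ((n - 1) choose (2 * k)) * 2 ^ Suc n"
proof -
  obtain j where j: "n = Suc (Suc j)" using n by (metis add_2_eq_Suc le_Suc_ex)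
  have "q \<noteq> []" using q by auto
  then have "card (fibre_ver (Suc n) q) * 4 ^ Suc k
      = 2 * (card (fibre_ver n q) * 4 ^ Suc k) + card (block_fibre (n - 1) (tl q)) * 4 ^ Suc k"
    using card_fibre_ver_Suc[OF n] by (simp add: algebra_simps)
  also have "\<dots> = ((n - 1) choose (2 * k)) * 2 ^ Suc n"
  proof (cases k)
    case 0
    with q have "tl q = []" by (cases q) auto
    with ver show ?thesis using block_fibre_Nil[of "n - 1"] by (simp add: j 0)
  next
    case (Suc k')
    then have "card (block_fibre (n - 1) (tl q)) * 4 ^ Suc k = 4 * ((j choose (2 * k' + 1)) * 2 ^ Suc j)"
      using fibre[OF Suc] by (simp add: j)
    moreover have "((n - 1) choose (2 * k)) = (j choose (2 * k' + 1)) + (j choose Suc (2 * k' + 1))"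
      by (simp add: j Suc)
    ultimately show ?thesis using ver by (simp add: j Suc algebra_simps)
  qed
  finally show ?thesis .
qed

lemma card_block_fibre_Suc_count:
  assumes n: "n \<ge> 2"
    and fibre: "card (block_fibre n q) * 4 ^ Suc k = ((n - 1) choose (2 * k + 1)) * 2 ^ n"
    and ver: "card (fibre_ver (Suc n) q) * 4 ^ Suc k = ((n - 1) choose (2 * k)) * 2 ^ Suc n"
  shows "card (block_fibre (Suc n) q) * 4 ^ Suc k = (n choose (2 * k + 1)) * 2 ^ Suc n"
proof -
  obtain j where j: "n = Suc j" using n by (cases n) auto
  have "card (block_fibre (Suc n) q) * 4 ^ Suc k
      = 2 * (card (block_fibre n q) * 4 ^ Suc k) + card (fibre_ver (Suc n) q) * 4 ^ Suc k"
    using card_fibre_hor_Suc[OF n] by (simp add: card_block_fibre_split algebra_simps)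
  also have "\<dots> = (n choose (2 * k + 1)) * 2 ^ Suc n"
  proof -
    have "n choose (2 * k + 1) = (j choose (2 * k)) + (j choose (2 * k + 1))"
      using j by simp
    then show ?thesis unfolding fibre ver using j by (simp add: algebra_simps)
  qed
  finally show ?thesis .
qed

lemma card_fibre_counts:
  assumes "n \<ge> 1" and "length q = Suc k"
  shows "card (block_fibre n q) * 4 ^ Suc k = ((n - 1) choose (2 * k + 1)) * 2 ^ n
       \<and> (n \<ge> 2 \<longrightarrow> card (fibre_ver n q) * 4 ^ Suc k = ((n - 2) choose (2 * k)) * 2 ^ n)"
  using assms
proof (induction n arbitrary: q k rule: less_induct)
  case (less n)
  consider "n = 1" | "n = 2" | n0 where "n = Suc n0" "n0 \<ge> 2"
  proof (cases "n \<le> 2")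
    case False
    then show ?thesis using that(3)[of "n - 1"] by simp
  qed (use less.prems(1) that in linarith)
  then show ?case
  proof cases
    case 1
    then show ?thesis by (simp add: block_fibre_def normal_paths_1[simplified])
  next
    case 2
    then show ?thesis
      using less.prems(2) by (simp add: card_block_fibre_split fibre_hor_2 fibre_ver_2)
  next
    case 3
    have IH: "card (block_fibre n0 q) * 4 ^ Suc k = ((n0 - 1) choose (2 * k + 1)) * 2 ^ n0"
      "card (fibre_ver n0 q) * 4 ^ Suc k = ((n0 - 2) choose (2 * k)) * 2 ^ n0"
      using less.IH[of n0 q k] less.prems 3 by auto
    have "card (block_fibre (n0 - 1) (tl q)) * 4 ^ Suc k' = ((n0 - 2) choose (2 * k' + 1)) * 2 ^ (n0 - 1)"
      if "k = Suc k'" for k'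
    proof -
      have "n0 - 1 < n" "n0 - 1 \<ge> 1" "length (tl q) = Suc k'" using less.prems that 3 by auto
      then have "card (block_fibre (n0 - 1) (tl q)) * 4 ^ Suc k'
          = ((n0 - 1 - 1) choose (2 * k' + 1)) * 2 ^ (n0 - 1)"
        using less.IH by blast
      then show ?thesis by (simp add: numeral_2_eq_2)
    qed
    then have ver: "card (fibre_ver n q) * 4 ^ Suc k = ((n - 2) choose (2 * k)) * 2 ^ n"
      using card_fibre_ver_Suc_count[OF 3(2) less.prems(2) IH(2)] 3 by simp
    with card_block_fibre_Suc_count[OF 3(2) IH(1)] 3 show ?thesis by simp
  qed
qed

lemma card_block_fibre:
  assumes n: "n \<ge> 1" and q: "q \<noteq> []"
  shows "card (block_fibre n q) = ((n - 1) choose (2 * length q - 1)) * 2 ^ (n - 2 * length q)"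
proof -
  obtain k where k: "length q = Suc k" using q by (cases q) auto
  have count: "card (block_fibre n q) * 4 ^ Suc k = ((n - 1) choose (2 * k + 1)) * 2 ^ n"
    using card_fibre_counts[OF n k] by simp
  show ?thesis
  proof (cases "2 * Suc k \<le> n")
    case True
    then have "(2::nat) ^ n = 2 ^ ((n - 2 * Suc k) + 2 * Suc k)"
      by (simp only: le_add_diff_inverse2)
    also have "\<dots> = 2 ^ (n - 2 * Suc k) * 4 ^ Suc k"
      by (simp only: power_add power_mult) simp
    finally have "(2::nat) ^ n = 2 ^ (n - 2 * Suc k) * 4 ^ Suc k" .
    with count show ?thesis by (simp add: k)
  next
    case False
    with n count show ?thesis by (simp add: k binomial_eq_0)
  qed
qed

section \<open>Normalisation\<close>

definition rot_inv :: "step \<Rightarrow> step" where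
  "rot_inv s = rot (rot (rot s))"

lemma rot_rot_inv [simp]: "rot (rot_inv s) = s" "rot_inv (rot s) = s"
  by (cases s; simp add: rot_inv_def)+

lemma vertical_rot [simp]: "vertical (rot s) \<longleftrightarrow> horizontal s" "vertical (rot_inv s) \<longleftrightarrow> horizontal s"
  by (cases s; simp add: rot_inv_def)+

definition hor_start_paths :: "nat \<Rightarrow> lpath set" where
  "hor_start_paths n = {p. length p = n \<and> horizontal (hd p)}"

lemma sum_norm_first:
  fixes g :: "lpath \<Rightarrow> real"
  assumes n: "n \<ge> 1"
  shows "(\<Sum>p | length p = n. g (norm_first p)) = 2 * (\<Sum>p\<in>hor_start_paths n. g p)"
proof -
  define V where "V = {p :: lpath. length p = n \<and> vertical (hd p)}"
  have split: "{p. length p = n} = hor_start_paths n \<union> V" "hor_start_paths n \<inter> V = {}"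
    by (auto simp: hor_start_paths_def V_def)
  have finite: "finite (hor_start_paths n)" "finite V"
    using finite_paths_of_length[of n] by (auto simp: split(1))
  have "(\<Sum>p | length p = n. g (norm_first p))
      = (\<Sum>p\<in>hor_start_paths n. g (norm_first p)) + (\<Sum>p\<in>V. g (norm_first p))"
    unfolding split(1) by (rule sum.union_disjoint) (use finite split(2) in auto)
  also have "(\<Sum>p\<in>hor_start_paths n. g (norm_first p)) = (\<Sum>p\<in>hor_start_paths n. g p)"
    by (intro sum.cong refl) (auto simp: hor_start_paths_def norm_first_def)
  also have "(\<Sum>p\<in>V. g (norm_first p)) = (\<Sum>p\<in>V. g (map rot p))"
    by (intro sum.cong refl) (auto simp: V_def norm_first_def)
  also have "\<dots> = (\<Sum>p\<in>hor_start_paths n. g p)"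
  proof (rule sum.reindex_bij_betw)
    show "bij_betw (map rot) V (hor_start_paths n)"
    proof (rule bij_betw_byWitness[where f'="map rot_inv"])
      show "map rot ` V \<subseteq> hor_start_paths n" "map rot_inv ` hor_start_paths n \<subseteq> V"
        using n by (auto simp: V_def hor_start_paths_def hd_map Suc_le_eq)
    qed (simp_all add: map_idI)
  qed
  finally show ?thesis by simp
qed

lemma sum_norm_last:
  fixes g :: "lpath \<Rightarrow> real"
  assumes n: "n \<ge> 2"
  shows "(\<Sum>p\<in>hor_start_paths n. g (norm_last p)) = 2 * (\<Sum>p\<in>normal_paths n. g p)"
proof -
  define M where "M = {p :: lpath. length p = n \<and> horizontal (hd p) \<and> horizontal (last p)}"
  have split: "hor_start_paths n = normal_paths n \<union> M" "normal_paths n \<inter> M = {}"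
    by (auto simp: hor_start_paths_def M_def normal_paths_def)
  have finite: "finite M"
    by (rule finite_subset[OF _ finite_paths_of_length[of n]]) (auto simp: M_def)
  have "(\<Sum>p\<in>hor_start_paths n. g (norm_last p))
      = (\<Sum>p\<in>normal_paths n. g (norm_last p)) + (\<Sum>p\<in>M. g (norm_last p))"
    unfolding split(1) by (rule sum.union_disjoint) (use finite_normal_paths finite split(2) in auto)
  also have "(\<Sum>p\<in>normal_paths n. g (norm_last p)) = (\<Sum>p\<in>normal_paths n. g p)"
    by (intro sum.cong refl) (auto simp: normal_paths_def norm_last_def)
  also have "(\<Sum>p\<in>M. g (norm_last p)) = (\<Sum>p\<in>M. g (butlast p @ [rot (last p)]))"
    by (intro sum.cong refl) (auto simp: M_def norm_last_def)
  also have "\<dots> = (\<Sum>p\<in>normal_paths n. g p)"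
  proof (rule sum.reindex_bij_betw)
    have hd_butlast: "hd (butlast p @ [s]) = hd p" if "length p \<ge> 2" for p :: lpath and s
      using Cons_Cons_if_length_ge_2[OF that] by auto
    show "bij_betw (\<lambda>p. butlast p @ [rot (last p)]) M (normal_paths n)"
    proof (rule bij_betw_byWitness[where f'="\<lambda>p. butlast p @ [rot_inv (last p)]"])
      show "\<forall>a\<in>M. butlast (butlast a @ [rot (last a)]) @ [rot_inv (last (butlast a @ [rot (last a)]))] = a"
        using n by (auto simp: M_def intro!: append_butlast_last_id)
      show "\<forall>a\<in>normal_paths n.
          butlast (butlast a @ [rot_inv (last a)]) @ [rot (last (butlast a @ [rot_inv (last a)]))] = a"
        using n by (auto simp: normal_paths_def intro!: append_butlast_last_id)
      show "(\<lambda>p. butlast p @ [rot (last p)]) ` M \<subseteq> normal_paths n"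
        "(\<lambda>p. butlast p @ [rot_inv (last p)]) ` normal_paths n \<subseteq> M"
        using n hd_butlast by (auto simp: M_def normal_paths_def)
    qed
  qed
  finally show ?thesis by simp
qed

lemma norm_in_normal_paths:
  assumes "length p = n" and "n \<ge> 2"
  shows "norm_last (norm_first p) \<in> normal_paths n"
proof -
  obtain x y r where "p = x # y # r" using Cons_Cons_if_length_ge_2[of p] assms by auto
  then have "length (norm_first p) = n" "horizontal (hd (norm_first p))"
    using assms by (auto simp: norm_first_def)
  moreover obtain a b c where "norm_first p = a # b # c"
    using Cons_Cons_if_length_ge_2 assms calculation by metis
  ultimately show ?thesis by (auto simp: norm_last_def normal_paths_def)
qed

lemma length_blocks_normal_path:
  assumes "p \<in> normal_paths n" and "n \<ge> 1"
  shows "1 \<le> length (blocks p) \<and> 2 * length (blocks p) \<le> n"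
proof -
  from assms have ne: "blocks p \<noteq> []" by (auto simp: normal_paths_def)
  then have len: "length (blocks p) \<ge> 1" by (cases "blocks p") auto
  from assms(1) have "p \<in> block_fibre n (blocks p)" by (simp add: block_fibre_def)
  then have "card (block_fibre n (blocks p)) > 0" using finite_fibres(1) by (auto simp: card_gt_0_iff)
  then have "(n - 1) choose (2 * length (blocks p) - 1) > 0"
    using card_block_fibre[OF assms(2) ne] by simp
  then show ?thesis using len by (simp add: zero_less_binomial_iff)
qed

lemma length_PhiL:
  assumes "length p \<ge> 2"
  shows "1 \<le> length (PhiL p) \<and> 2 * length (PhiL p) \<le> length p"
  using length_blocks_normal_path[OF norm_in_normal_paths[OF refl assms]] assms
  by (simp add: PhiL_def)

section \<open>Compactification degree and the total fringe size\<close>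

lemma cdeg_exists: "length p \<ge> 1 \<Longrightarrow> \<exists>m. length ((PhiL ^^ m) p) = 1"
proof (induction "length p" arbitrary: p rule: less_induct)
  case less
  show ?case
  proof (cases "length p = 1")
    case True
    then show ?thesis by (intro exI[of _ 0]) simp
  next
    case False
    with less.prems have "length p \<ge> 2" by simp
    then have "1 \<le> length (PhiL p)" "length (PhiL p) < length p" using length_PhiL by fastforce+
    then obtain m where "length ((PhiL ^^ m) (PhiL p)) = 1" using less.hyps by blast
    then show ?thesis by (intro exI[of _ "Suc m"]) (simp add: funpow_Suc_right del: funpow.simps)
  qed
qed

lemma cdeg_length_1: "length p = 1 \<Longrightarrow> cdeg p = 0"
  unfolding cdeg_def by (rule Least_eq_0) simp

lemma cdeg_PhiL:
  assumes "length p \<ge> 2"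
  shows "cdeg p = Suc (cdeg (PhiL p))"
proof -
  obtain m where "length ((PhiL ^^ m) p) = 1" using cdeg_exists[of p] assms by auto
  then have "cdeg p = Suc (LEAST m. length ((PhiL ^^ Suc m) p) = 1)"
    unfolding cdeg_def by (rule Least_Suc) (use assms in simp)
  also have "(\<lambda>m. (PhiL ^^ Suc m) p) = (\<lambda>m. (PhiL ^^ m) (PhiL p))"
    by (simp add: funpow_Suc_right del: funpow.simps)
  finally show ?thesis by (simp add: cdeg_def)
qed

lemma cdeg_less_length: "length p \<ge> 1 \<Longrightarrow> cdeg p < length p"
proof (induction "length p" arbitrary: p rule: less_induct)
  case less
  show ?case
  proof (cases "length p = 1")
    case True
    then show ?thesis by (simp add: cdeg_length_1)
  next
    case False
    with less.prems have l: "length p \<ge> 2" by simp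
    then have "1 \<le> length (PhiL p)" "2 * length (PhiL p) \<le> length p" using length_PhiL by auto
    then show ?thesis using less.hyps[of "PhiL p"] cdeg_PhiL[OF l] by simp
  qed
qed

definition total_fringe :: "lpath \<Rightarrow> real" where
  "total_fringe p = (\<Sum>r\<le>cdeg p. real (length ((PhiL ^^ r) p)))"

lemma total_fringe_length_1: "length p = 1 \<Longrightarrow> total_fringe p = 1"
  by (simp add: total_fringe_def cdeg_length_1)

lemma total_fringe_PhiL: "length p \<ge> 2 \<Longrightarrow> total_fringe p = real (length p) + total_fringe (PhiL p)"
  unfolding total_fringe_def cdeg_PhiL
  by (subst sum.atMost_Suc_shift) (simp add: funpow_Suc_right del: funpow.simps)

definition fringe_sum :: "nat \<Rightarrow> real" where
  "fringe_sum n = (\<Sum>p | length p = n. total_fringe p)"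

lemma E_L_total_eq_fringe_sum:
  assumes n: "n \<ge> 1"
  shows "E_L_total n = fringe_sum n / 4 ^ n"
proof -
  have fringe_size_sum: "(\<Sum>r<n. real (fringe_size p r)) = total_fringe p" if "length p = n" for p
  proof -
    from that n have "cdeg p < n" using cdeg_less_length[of p] by simp
    then have "(\<Sum>r<n. real (fringe_size p r)) = (\<Sum>r\<le>cdeg p. real (fringe_size p r))"
      by (intro sum.mono_neutral_right) (auto simp: fringe_size_def)
    then show ?thesis by (simp add: total_fringe_def fringe_size_def)
  qed
  have "E_L n r = 0" if "r \<notin> {..<n}" for r
    using that cdeg_less_length n by (fastforce simp: E_L_def fringe_size_def intro: sum.neutral)
  then have "E_L_total n = (\<Sum>r<n. E_L n r)"
    unfolding E_L_total_def by (intro sums_unique[symmetric] sums_finite) auto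
  also have "\<dots> = (\<Sum>p | length p = n. \<Sum>r<n. real (fringe_size p r)) / 4 ^ n"
    by (simp add: E_L_def card_paths_of_length sum_divide_distrib[symmetric]) (rule sum.swap)
  also have "\<dots> = fringe_sum n / 4 ^ n"
    by (simp add: fringe_sum_def fringe_size_sum)
  finally show ?thesis .
qed

lemma sum_normal_paths_blocks:
  fixes f :: "lpath \<Rightarrow> real"
  assumes n: "n \<ge> 1"
  shows "(\<Sum>p\<in>normal_paths n. f (blocks p))
       = (\<Sum>k=1..n. real ((n - 1) choose (2 * k - 1)) * 2 ^ (n - 2 * k) * (\<Sum>q | length q = k. f q))"
proof -
  define Q where "Q = (\<Union>k\<in>{1..n}. {q :: lpath. length q = k})"
  have "(\<Sum>p\<in>normal_paths n. f (blocks p)) = (\<Sum>q\<in>Q. \<Sum>p\<in>block_fibre n q. f (blocks p))"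
    unfolding block_fibre_def
  proof (rule sum.group[symmetric])
    show "finite Q" unfolding Q_def using finite_paths_of_length by auto
    show "blocks ` normal_paths n \<subseteq> Q"
      using length_blocks_normal_path n by (force simp: Q_def)
  qed (rule finite_normal_paths)
  also have "\<dots> = (\<Sum>q\<in>Q. real (card (block_fibre n q)) * f q)"
    by (intro sum.cong refl) (simp add: block_fibre_def)
  also have "\<dots> = (\<Sum>k=1..n. \<Sum>q | length q = k. real (card (block_fibre n q)) * f q)"
    unfolding Q_def by (rule sum.UNION_disjoint) (auto simp: finite_paths_of_length)
  also have "\<dots> = (\<Sum>k=1..n. real ((n - 1) choose (2 * k - 1)) * 2 ^ (n - 2 * k) * (\<Sum>q | length q = k. f q))"
  proof (intro sum.cong refl)
    fix k assume k: "k \<in> {1..n}"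
    have "real (card (block_fibre n q)) = real ((n - 1) choose (2 * k - 1)) * 2 ^ (n - 2 * k)"
      if "q \<in> {q. length q = k}" for q
      using card_block_fibre[OF n, of q] that k by (auto simp: Suc_le_eq)
    then show "(\<Sum>q | length q = k. real (card (block_fibre n q)) * f q)
        = real ((n - 1) choose (2 * k - 1)) * 2 ^ (n - 2 * k) * (\<Sum>q | length q = k. f q)"
      by (simp add: sum_distrib_left mult.assoc)
  qed
  finally show ?thesis .
qed

lemma fringe_sum_rec:
  assumes n: "n \<ge> 2"
  shows "fringe_sum n = real n * 4 ^ n
    + 4 * (\<Sum>k=1..n. real ((n - 1) choose (2 * k - 1)) * 2 ^ (n - 2 * k) * fringe_sum k)"
proof -
  have "fringe_sum n = (\<Sum>p | length p = n. real n + total_fringe (PhiL p))"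
    unfolding fringe_sum_def using n by (intro sum.cong refl) (simp add: total_fringe_PhiL)
  also have "\<dots> = real n * 4 ^ n + (\<Sum>p | length p = n. total_fringe (blocks (norm_last (norm_first p))))"
    by (simp add: sum.distrib card_paths_of_length PhiL_def)
  also have "(\<Sum>p | length p = n. total_fringe (blocks (norm_last (norm_first p))))
      = 4 * (\<Sum>p\<in>normal_paths n. total_fringe (blocks p))"
    using sum_norm_first[of n "\<lambda>p. total_fringe (blocks (norm_last p))"] sum_norm_last[OF n] n by simp
  finally show ?thesis
    using n by (simp add: sum_normal_paths_blocks fringe_sum_def)
qed

lemma fringe_sum_1: "fringe_sum 1 = 4"
  using card_paths_of_length[of 1] by (simp add: fringe_sum_def total_fringe_length_1)

lemma fringe_sum_eq_closed_form: "n \<ge> 1 \<Longrightarrow> fringe_sum n = closed_form n"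
proof (induction n rule: less_induct)
  case (less n)
  show ?case
  proof (cases "n = 1")
    case True
    then show ?thesis using closed_form_rec[of 1] fringe_sum_1 by simp
  next
    case False
    with less.prems have n: "n \<ge> 2" by simp
    have "(\<Sum>k=1..n. real ((n - 1) choose (2 * k - 1)) * 2 ^ (n - 2 * k) * fringe_sum k)
        = (\<Sum>k=1..n. real ((n - 1) choose (2 * k - 1)) * 2 ^ (n - 2 * k) * closed_form k)"
    proof (intro sum.cong refl)
      fix k assume k: "k \<in> {1..n}"
      show "real ((n - 1) choose (2 * k - 1)) * 2 ^ (n - 2 * k) * fringe_sum k
          = real ((n - 1) choose (2 * k - 1)) * 2 ^ (n - 2 * k) * closed_form k"
      proof (cases "2 * k - 1 \<le> n - 1")
        case True
        with n k have "k < n" by simp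
        with k show ?thesis using less.IH[of k] by simp
      qed simp
    qed
    then show ?thesis using fringe_sum_rec[OF n] closed_form_rec[of n] n by simp
  qed
qed

theorem corollary3:
  fixes n :: nat
  assumes "n \<ge> 1"
  shows "E_L_total n =
    4 / (3 * 4 ^ n) *
    (\<Sum>k=1..n.
       (2 * real k ^ 3 * (2 - 1 / 2 ^ multiplicity (2::nat) k)
        + real k * (2 ^ (multiplicity (2::nat) k + 1) - 1))
       * (binom_int (2 * n - 1) (int n - int k) - binom_int (2 * n - 1) (int n - int k - 1)))"
proof -
  have "E_L_total n = closed_form n / 4 ^ n"
    using E_L_total_eq_fringe_sum[OF assms] fringe_sum_eq_closed_form[OF assms] by simp
  then show ?thesis
    unfolding ballot_eq_binom_int_diff[OF assms] by (simp add: closed_form_def fringe_coeff_def)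
qed

end
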